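(* Let $X_1,\dots,X_n$ be i.i.d. copies of $X$ and $Y_1,\dots,Y_m$ be i.i.d. copies of $Y$. Let $\tau_{k|n}(\mathbf X)$ denote the lifetime of the $k$-out-of-$n$ system with component lifetimes $X_1,\dots,X_n$ and $\tau_{l|m}(\mathbf Y)$ the lifetime of the $l$-out-of-$m$ system with component lifetimes $Y_1,\dots,Y_m$. If $X\underset{c}{\prec}Y$ and $Y\le_{rhr}X$, then $\tau_{k|n}(\mathbf X)\underset{c}{\prec}\tau_{l|m}(\mathbf Y)$ for all $1\le k\le n$, $1\le l\le m$ with $k\le l$ and $m-l\le n-k$.
   Context: All random variables are non-negative and absolutely continuous with support $[0,\infty)$. For a random variable $W$: density $f_W$, cdf $F_W$, survival $\bar F_W=1-F_W$, hazard rate $r_W=f_W/\bar F_W$. $X\le_{rhr}Y$ means $F_Y(x)/F_X(x)$ is increasing in $x$. $X\underset{c}{\prec}Y$ means $r_X(x)/r_Y(x)$ is increasing in $x\ge0$. A $k$-out-of-$n$ system functions as long as at least $k$ of its $n$ components function. "Increasing" means non-decreasing. *)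

theory Defs
  imports "HOL-Probability.Probability"
begin

definition rv_cdf :: "'a measure \<Rightarrow> ('a \<Rightarrow> real) \<Rightarrow> real \<Rightarrow> real" where
  "rv_cdf M Z x = measure M {\<omega> \<in> space M. Z \<omega> \<le> x}"

definition hazard_rate :: "'a measure \<Rightarrow> ('a \<Rightarrow> real) \<Rightarrow> (real \<Rightarrow> real) \<Rightarrow> real \<Rightarrow> real" where
  "hazard_rate M Z f x = f x / (1 - rv_cdf M Z x)"

text \<open>Standing assumption: Z is non-negative, absolutely continuous with density f,
  and has support [0,infinity) (cdf strictly increasing on [0,infinity)).\<close>
definition nonneg_ac_rv :: "'a measure \<Rightarrow> ('a \<Rightarrow> real) \<Rightarrow> (real \<Rightarrow> real) \<Rightarrow> bool" where
  "nonneg_ac_rv M Z f \<longleftrightarrow>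
     distributed M lborel Z (\<lambda>x. ennreal (f x)) \<and> (\<forall>x. 0 \<le> f x) \<and>
     (AE \<omega> in M. 0 \<le> Z \<omega>) \<and> strict_mono_on {0..} (rv_cdf M Z)"

definition c_order :: "'a measure \<Rightarrow> ('a \<Rightarrow> real) \<Rightarrow> (real \<Rightarrow> real) \<Rightarrow>
    'b measure \<Rightarrow> ('b \<Rightarrow> real) \<Rightarrow> (real \<Rightarrow> real) \<Rightarrow> bool" where
  "c_order M X fX N Y fY \<longleftrightarrow>
     mono_on {0..} (\<lambda>x. hazard_rate M X fX x / hazard_rate N Y fY x)"

definition rhr_le :: "'a measure \<Rightarrow> ('a \<Rightarrow> real) \<Rightarrow> 'b measure \<Rightarrow> ('b \<Rightarrow> real) \<Rightarrow> bool" where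
  "rhr_le M X N Y \<longleftrightarrow> mono_on {0<..} (\<lambda>x. rv_cdf N Y x / rv_cdf M X x)"

text \<open>Lifetime of the k-out-of-n system with component lifetimes X 0, ..., X (n-1):
  the system functions at time t iff at least k components function (X i > t).\<close>
definition kofn_lifetime :: "nat \<Rightarrow> nat \<Rightarrow> (nat \<Rightarrow> 'a \<Rightarrow> real) \<Rightarrow> 'a \<Rightarrow> real" where
  "kofn_lifetime k n X \<omega> = Sup {t. k \<le> card {i. i < n \<and> t < X i \<omega>}}"

end

theory Submission
  imports Defs
begin

text \<open>
  With \<open>s = n - k\<close>, a \<open>k\<close>-out-of-\<open>n\<close> system survives time \<open>x\<close> iff at least \<open>k\<close> of its
  i.i.d. components do, so its survival function is \<open>(1 - F)^k K\<^sub>k\<^sub>,\<^sub>s(F)\<close> with the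
  truncated negative binomial series \<open>K\<^sub>k\<^sub>,\<^sub>s(u) = \<Sum>i\<le>s. C(k-1+i, i) u^i\<close> and \<open>F\<close> the component
  cdf. Its density is \<open>f\<close> times a Beta density evaluated at \<open>F\<close>, and its hazard rate is
  \<open>r \<cdot> H\<^sub>k\<^sub>,\<^sub>s(F)\<close> with \<open>H\<^sub>k\<^sub>,\<^sub>s(u) = (k+s) C(k-1+s, s) u^s / K\<^sub>k\<^sub>,\<^sub>s(u)\<close>. The ratio of the two
  system hazard rates is therefore \<open>(r\<^sub>X / r\<^sub>Y) \<cdot> H\<^sub>k\<^sub>,\<^sub>n\<^sub>-\<^sub>k(F\<^sub>X) / H\<^sub>l\<^sub>,\<^sub>m\<^sub>-\<^sub>l(F\<^sub>Y)\<close>. The first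
  factor increases by hypothesis. For the second, \<open>Y \<le>\<^sub>r\<^sub>h\<^sub>r X\<close> makes \<open>F\<^sub>X / F\<^sub>Y\<close> increase,
  hence \<open>F\<^sub>X \<le> F\<^sub>Y\<close>, and for \<open>k \<le> l\<close>, \<open>m - l \<le> n - k\<close> the quotient \<open>H\<^sub>k\<^sub>,\<^sub>s(a) / H\<^sub>l\<^sub>,\<^sub>t(b)\<close>
  increases along every such path \<open>(a, b)\<close>: all needed inequalities are cross-multiplied
  comparisons of power series whose coefficient ratios are monotone.
\<close>

section \<open>Truncated negative binomial series\<close>

definition nbinom_poly :: "nat \<Rightarrow> nat \<Rightarrow> real \<Rightarrow> real" where
  "nbinom_poly k s u = (\<Sum>i\<le>s. real ((k - 1 + i) choose i) * u ^ i)"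

definition beta_density :: "nat \<Rightarrow> nat \<Rightarrow> real \<Rightarrow> real" where
  "beta_density k s u = real (k + s) * real ((k - 1 + s) choose s) * (1 - u) ^ (k - 1) * u ^ s"

definition hazard_factor :: "nat \<Rightarrow> nat \<Rightarrow> real \<Rightarrow> real" where
  "hazard_factor k s u = real (k + s) * real ((k - 1 + s) choose s) * u ^ s / nbinom_poly k s u"

lemma Suc_times_binomial_pred:
  assumes "1 \<le> k"
  shows "real (Suc s) * real ((k + s) choose Suc s) = real (k + s) * real ((k - 1 + s) choose s)"
proof -
  have "Suc s * ((k + s) choose Suc s) = (k + s) * ((k - 1 + s) choose s)"
    using Suc_times_binomial[of s "k - 1 + s"] assms by simp
  then show ?thesis
    by (metis of_nat_mult)
qed

lemma nbinom_poly_Suc: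
  "1 \<le> k \<Longrightarrow> nbinom_poly k (Suc s) u = nbinom_poly k s u + real ((k + s) choose Suc s) * u ^ Suc s"
  by (cases k) (auto simp: nbinom_poly_def)

lemma nbinom_poly_0 [simp]: "nbinom_poly k 0 u = 1"
  by (simp add: nbinom_poly_def)

lemma nbinom_poly_at_0 [simp]: "nbinom_poly k s 0 = 1"
  by (simp add: nbinom_poly_def zero_power)

lemma nbinom_poly_ge_1:
  assumes "0 \<le> u"
  shows "1 \<le> nbinom_poly k s u"
proof -
  have "nbinom_poly k s u = 1 + (\<Sum>i\<in>{1..s}. real ((k - 1 + i) choose i) * u ^ i)"
    unfolding nbinom_poly_def atMost_atLeast0 by (simp add: sum.atLeast_Suc_atMost)
  also have "\<dots> \<ge> 1" using assms by (intro add_increasing2 sum_nonneg) auto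
  finally show ?thesis .
qed

lemma nbinom_poly_pos: "0 \<le> u \<Longrightarrow> 0 < nbinom_poly k s u"
  using nbinom_poly_ge_1[of u k s] by linarith

lemma beta_density_nonneg: "0 \<le> u \<Longrightarrow> u \<le> 1 \<Longrightarrow> 0 \<le> beta_density k s u"
  unfolding beta_density_def by simp

lemma beta_density_pos: "1 \<le> k \<Longrightarrow> 0 < u \<Longrightarrow> u < 1 \<Longrightarrow> 0 < beta_density k s u"
  unfolding beta_density_def by (auto intro!: mult_pos_pos)

lemma borel_measurable_beta_density [measurable]: "beta_density k s \<in> borel_measurable borel"
  unfolding beta_density_def by measurable

lemma hazard_factor_nonneg: "0 \<le> u \<Longrightarrow> 0 \<le> hazard_factor k s u"
  unfolding hazard_factor_def using nbinom_poly_pos[of u k s] by simp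

lemma binomial_term_Suc:
  fixes p q :: real
  assumes "p + q = 1" "1 \<le> j" "j \<le> Suc n"
  shows "real (Suc n choose j) * p ^ j * q ^ (Suc n - j)
    = q * (real (n choose j) * p ^ j * q ^ (n - j))
      + p * (real (n choose (j - 1)) * p ^ (j - 1) * q ^ (n - (j - 1)))"
proof -
  obtain j' where j': "j = Suc j'" using assms by (cases j) auto
  have "real (n choose j) * p ^ j * q ^ (Suc n - j) = q * (real (n choose j) * p ^ j * q ^ (n - j))"
    by (cases "j \<le> n") (auto simp: Suc_diff_le)
  then show ?thesis
    unfolding j' by (simp add: algebra_simps)
qed

lemma binomial_tail_Suc:
  fixes p q :: real
  assumes "p + q = 1" "1 \<le> k" "k \<le> n"
  shows "(\<Sum>j=k..Suc n. real (Suc n choose j) * p ^ j * q ^ (Suc n - j))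
    = (\<Sum>j=k..n. real (n choose j) * p ^ j * q ^ (n - j)) + real (n choose (k - 1)) * p ^ k * q ^ (Suc n - k)"
proof -
  define b where "b j = real (n choose j) * p ^ j * q ^ (n - j)" for j
  obtain k' where k': "k = Suc k'" using assms by (cases k) auto
  have "(\<Sum>j=k..Suc n. real (Suc n choose j) * p ^ j * q ^ (Suc n - j))
      = (\<Sum>j=k..Suc n. q * b j + p * b (j - 1))"
    using assms unfolding b_def by (intro sum.cong refl binomial_term_Suc) auto
  also have "\<dots> = q * (\<Sum>j=k..Suc n. b j) + p * (\<Sum>j=k..Suc n. b (j - 1))"
    by (simp only: sum.distrib sum_distrib_left)
  also have "(\<Sum>j=k..Suc n. b j) = (\<Sum>j=k..n. b j)"
    using assms by (simp add: b_def)
  also have "(\<Sum>j=k..Suc n. b (j - 1)) = b k' + (\<Sum>j=k..n. b j)"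
    using assms unfolding k' sum.shift_bounds_cl_Suc_ivl by (simp add: sum.atLeast_Suc_atMost)
  finally have "(\<Sum>j=k..Suc n. real (Suc n choose j) * p ^ j * q ^ (Suc n - j))
      = (p + q) * (\<Sum>j=k..n. b j) + p * b k'"
    by (simp add: algebra_simps)
  then show ?thesis
    using assms by (simp add: b_def k')
qed

lemma binomial_tail_eq_nbinom_poly:
  fixes p q :: real
  assumes "p + q = 1" "1 \<le> k"
  shows "(\<Sum>j=k..k + s. real ((k + s) choose j) * p ^ j * q ^ (k + s - j)) = p ^ k * nbinom_poly k s q"
proof (induction s)
  case 0
  then show ?case by simp
next
  case (Suc s)
  have "(k + s) choose (k - 1) = (k + s) choose Suc s"
    using assms by (subst binomial_symmetric) (auto simp: Suc_diff_le)
  then show ?case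
    using binomial_tail_Suc[OF assms, of "k + s"] Suc.IH
    by (simp add: nbinom_poly_Suc[OF assms(2)] algebra_simps)
qed

lemma has_real_derivative_binomial_survival:
  assumes "1 \<le> k"
  shows "((\<lambda>u. (1 - u) ^ k * nbinom_poly k s u) has_real_derivative - beta_density k s u) (at u)"
proof (induction s)
  case 0
  have "((\<lambda>u. (1 - u) ^ k) has_real_derivative real k * (1 - u) ^ (k - 1) * (-1)) (at u)"
    by (auto intro!: derivative_eq_intros)
  then show ?case by (simp add: beta_density_def)
next
  case (Suc s)
  obtain k' where k': "k = Suc k'" using assms by (cases k) auto
  define c where "c = real ((k + s) choose Suc s)"
  have c: "real (Suc s) * c = real (k + s) * real ((k - 1 + s) choose s)"
    unfolding c_def by (rule Suc_times_binomial_pred[OF assms])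
  have "((\<lambda>u. (1 - u) ^ Suc k' * u ^ Suc s) has_real_derivative
      - real (Suc k') * (1 - u) ^ k' * u ^ Suc s + (1 - u) ^ Suc k' * (real (Suc s) * u ^ s)) (at u)"
    by (rule derivative_eq_intros refl)+ (simp add: algebra_simps)
  then have "((\<lambda>u. (1 - u) ^ k * nbinom_poly k s u + c * ((1 - u) ^ k * u ^ Suc s)) has_real_derivative
      - beta_density k s u + c * (- real k * (1 - u) ^ k' * u ^ Suc s + (1 - u) ^ k * (real (Suc s) * u ^ s)))
      (at u)"
    unfolding k' by (intro DERIV_add DERIV_cmult Suc.IH[unfolded k'])
  moreover have "(\<lambda>u. (1 - u) ^ k * nbinom_poly k (Suc s) u)
      = (\<lambda>u. (1 - u) ^ k * nbinom_poly k s u + c * ((1 - u) ^ k * u ^ Suc s))"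
    by (simp add: nbinom_poly_Suc[OF assms] c_def algebra_simps)
  moreover have "- beta_density k s u + c * (- real k * (1 - u) ^ k' * u ^ Suc s + (1 - u) ^ k * (real (Suc s) * u ^ s))
      = - beta_density k (Suc s) u"
  proof -
    have "k - 1 + Suc s = k + s" using assms by simp
    then have "beta_density k (Suc s) u = real (k + Suc s) * c * (1 - u) ^ k' * u ^ Suc s"
      by (simp add: beta_density_def c_def k')
    moreover have "beta_density k s u = real (Suc s) * c * (1 - u) ^ k' * u ^ s"
      unfolding beta_density_def c[symmetric] by (simp add: k')
    ultimately show ?thesis
      unfolding k' by (simp add: algebra_simps)
  qed
  ultimately show ?case
    by simp
qed

lemma binomial_survival_strict_antimono:
  assumes "1 \<le> k" "0 \<le> a" "a < b" "b \<le> 1"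
  shows "(1 - b) ^ k * nbinom_poly k s b < (1 - a) ^ k * nbinom_poly k s a"
proof (rule DERIV_neg_imp_decreasing_open[OF \<open>a < b\<close>])
  fix x assume "a < x" "x < b"
  then show "\<exists>y. ((\<lambda>u. (1 - u) ^ k * nbinom_poly k s u) has_real_derivative y) (at x) \<and> y < 0"
    using has_real_derivative_binomial_survival[OF assms(1)] beta_density_pos[OF assms(1), of x s] assms
    by force
next
  show "continuous_on {a..b} (\<lambda>u. (1 - u) ^ k * nbinom_poly k s u)"
    using has_real_derivative_binomial_survival[OF assms(1)]
    by (intro DERIV_continuous_on) (auto intro: has_field_derivative_at_within)
qed

lemma nn_integral_beta_density:
  assumes "1 \<le> k" "0 \<le> v" "v \<le> 1"
  shows "(\<integral>\<^sup>+u. ennreal (beta_density k s u) * indicator {0..v} u \<partial>lborel)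
    = ennreal (1 - (1 - v) ^ k * nbinom_poly k s v)"
proof -
  have "(\<integral>\<^sup>+u. ennreal (beta_density k s u) * indicator {0..v} u \<partial>lborel)
      = ennreal (- ((1 - v) ^ k * nbinom_poly k s v) - - ((1 - 0) ^ k * nbinom_poly k s 0))"
  proof (rule nn_integral_FTC_Icc)
    fix x :: real
    show "((\<lambda>u. - ((1 - u) ^ k * nbinom_poly k s u)) has_real_derivative beta_density k s x) (at x)"
      using DERIV_minus[OF has_real_derivative_binomial_survival[OF assms(1)]] by simp
    assume "x \<in> {0..v}"
    then show "0 \<le> beta_density k s x"
      using assms by (intro beta_density_nonneg) auto
  qed (use assms in auto)
  then show ?thesis by simp
qed

section \<open>Monotonicity of the hazard factor ratio\<close>

lemma power_cross_le:
  fixes u u' :: real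
  assumes "0 \<le> u" "u \<le> u'" "i \<le> j"
  shows "u ^ j * u' ^ i \<le> u' ^ j * u ^ i"
proof -
  obtain d where j: "j = i + d" using assms le_Suc_ex by blast
  have "u ^ d * (u ^ i * u' ^ i) \<le> u' ^ d * (u ^ i * u' ^ i)"
    using assms by (intro mult_right_mono power_mono) auto
  then show ?thesis unfolding j by (simp add: power_add algebra_simps)
qed

lemma sum_power_cross_le:
  fixes a b :: "nat \<Rightarrow> real" and u u' :: real
  assumes u: "0 \<le> u" "u \<le> u'"
    and ab: "\<And>i j. i \<le> j \<Longrightarrow> a i * b j \<le> a j * b i"
  shows "(\<Sum>j\<le>N. a j * u ^ j) * (\<Sum>i\<le>N. b i * u' ^ i) \<le> (\<Sum>j\<le>N. a j * u' ^ j) * (\<Sum>i\<le>N. b i * u ^ i)"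
proof -
  define T where "T i j = a j * b i * (u' ^ j * u ^ i - u ^ j * u' ^ i)" for i j
  have diff: "(\<Sum>j\<le>N. a j * u' ^ j) * (\<Sum>i\<le>N. b i * u ^ i) - (\<Sum>j\<le>N. a j * u ^ j) * (\<Sum>i\<le>N. b i * u' ^ i)
      = (\<Sum>i\<le>N. \<Sum>j\<le>N. T i j)"
  proof -
    have "(\<Sum>j\<le>N. a j * u' ^ j) * (\<Sum>i\<le>N. b i * u ^ i) - (\<Sum>j\<le>N. a j * u ^ j) * (\<Sum>i\<le>N. b i * u' ^ i)
        = (\<Sum>i\<le>N. b i * u ^ i) * (\<Sum>j\<le>N. a j * u' ^ j) - (\<Sum>i\<le>N. b i * u' ^ i) * (\<Sum>j\<le>N. a j * u ^ j)"
      by simp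
    then show ?thesis
      unfolding T_def sum_product sum_subtractf[symmetric] by (simp add: algebra_simps)
  qed
  have "0 \<le> T i j + T j i" for i j
  proof -
    have "T i j + T j i = (a j * b i - a i * b j) * (u' ^ j * u ^ i - u ^ j * u' ^ i)"
      unfolding T_def by (simp add: algebra_simps)
    moreover have "0 \<le> (a j * b i - a i * b j) * (u' ^ j * u ^ i - u ^ j * u' ^ i)"
    proof (cases "i \<le> j")
      case True
      then show ?thesis using ab[OF True] power_cross_le[OF u True] by simp
    next
      case False
      then have "j \<le> i" by simp
      then show ?thesis using ab power_cross_le[OF u] by (simp add: mult_nonpos_nonpos mult.commute)
    qed
    ultimately show ?thesis by simp
  qed
  then have "0 \<le> (\<Sum>i\<le>N. \<Sum>j\<le>N. T i j + T j i)"
    by (intro sum_nonneg)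
  also have "\<dots> = 2 * (\<Sum>i\<le>N. \<Sum>j\<le>N. T i j)"
    using sum.swap[of T "{..N}" "{..N}"] by (simp add: sum.distrib)
  finally show ?thesis using diff by linarith
qed

lemma ratio_mono_of_consecutive:
  fixes a b :: "nat \<Rightarrow> real"
  assumes b: "\<And>j. 0 < b j" and consecutive: "\<And>j. a j * b (Suc j) \<le> a (Suc j) * b j"
  shows "i \<le> j \<Longrightarrow> a i * b j \<le> a j * b i"
proof (induction j rule: dec_induct)
  case (step j)
  have "b j * (a i * b (Suc j)) \<le> b j * (a (Suc j) * b i)"
  proof -
    have "a i * b j * b (Suc j) \<le> a j * b i * b (Suc j)"
      using step.IH b[of "Suc j"] by (intro mult_right_mono) auto
    also have "\<dots> = (a j * b (Suc j)) * b i" by simp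
    also have "\<dots> \<le> (a (Suc j) * b j) * b i"
      using consecutive b[of i] by (intro mult_right_mono) auto
    finally show ?thesis by (simp add: algebra_simps)
  qed
  then show ?case using b[of j] by simp
qed simp

lemma nbinom_poly_power_cross_le:
  assumes "0 \<le> a" "a \<le> b"
  shows "a ^ s * nbinom_poly k s b \<le> b ^ s * nbinom_poly k s a"
  unfolding nbinom_poly_def sum_distrib_left
proof (rule sum_mono)
  fix i assume "i \<in> {..s}"
  then have "a ^ s * b ^ i \<le> b ^ s * a ^ i"
    using power_cross_le[OF assms] by simp
  then show "a ^ s * (real ((k - 1 + i) choose i) * b ^ i) \<le> b ^ s * (real ((k - 1 + i) choose i) * a ^ i)"
    by (metis mult.left_commute mult_left_mono of_nat_0_le_iff)
qed

lemma hazard_factor_mono: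
  assumes "0 \<le> a" "a \<le> b"
  shows "hazard_factor k s a \<le> hazard_factor k s b"
proof -
  have "a ^ s / nbinom_poly k s a \<le> b ^ s / nbinom_poly k s b"
    using nbinom_poly_power_cross_le[OF assms] nbinom_poly_pos[of a] nbinom_poly_pos[of b] assms
    by (simp add: divide_simps)
  then have "real (k + s) * real ((k - 1 + s) choose s) * (a ^ s / nbinom_poly k s a)
      \<le> real (k + s) * real ((k - 1 + s) choose s) * (b ^ s / nbinom_poly k s b)"
    by (intro mult_left_mono) auto
  then show ?thesis
    by (simp add: hazard_factor_def)
qed

lemma nbinom_poly_scaled_cross_le:
  assumes u: "0 \<le> u" "u \<le> u'" and r: "0 \<le> \<rho>" "\<rho> \<le> 1"
  shows "nbinom_poly k s u * nbinom_poly k s (\<rho> * u') \<le> nbinom_poly k s u' * nbinom_poly k s (\<rho> * u)"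
proof -
  have scaled: "nbinom_poly k s (\<rho> * v) = (\<Sum>i\<le>s. (real ((k - 1 + i) choose i) * \<rho> ^ i) * v ^ i)" for v
    unfolding nbinom_poly_def by (simp add: power_mult_distrib algebra_simps)
  show ?thesis
    unfolding scaled unfolding nbinom_poly_def
  proof (rule sum_power_cross_le[OF u])
    fix i j :: nat assume "i \<le> j"
    then have "\<rho> ^ j \<le> \<rho> ^ i" using r by (simp add: power_decreasing)
    then show "real ((k - 1 + i) choose i) * (real ((k - 1 + j) choose j) * \<rho> ^ j)
       \<le> real ((k - 1 + j) choose j) * (real ((k - 1 + i) choose i) * \<rho> ^ i)"
      by (metis mult.left_commute mult_left_mono of_nat_0_le_iff)
  qed
qed

definition nbinom_shift_coeff :: "nat \<Rightarrow> nat \<Rightarrow> nat \<Rightarrow> real" where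
  "nbinom_shift_coeff d l j = (if d \<le> j then real ((l - 1 + (j - d)) choose (j - d)) else 0)"

lemma power_times_nbinom_poly:
  "u ^ d * nbinom_poly l t u = (\<Sum>j\<le>t + d. nbinom_shift_coeff d l j * u ^ j)"
proof -
  have "(\<Sum>j\<le>t + d. nbinom_shift_coeff d l j * u ^ j) = (\<Sum>j=d..t + d. nbinom_shift_coeff d l j * u ^ j)"
    by (intro sum.mono_neutral_right) (auto simp: nbinom_shift_coeff_def)
  also have "\<dots> = (\<Sum>i=0..t. nbinom_shift_coeff d l (i + d) * u ^ (i + d))"
    using sum.shift_bounds_cl_nat_ivl[of _ 0 d t] by simp
  also have "\<dots> = (\<Sum>i\<le>t. real ((l - 1 + i) choose i) * u ^ i * u ^ d)"
    by (intro sum.cong) (auto simp: nbinom_shift_coeff_def power_add atLeast0AtMost)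
  finally show ?thesis
    unfolding nbinom_poly_def sum_distrib_left by (simp add: algebra_simps)
qed

lemma nbinom_shift_coeff_ratio_step:
  assumes "1 \<le> k" "k \<le> l"
  shows "nbinom_shift_coeff d l j * real ((k - 1 + Suc j) choose Suc j)
    \<le> nbinom_shift_coeff d l (Suc j) * real ((k - 1 + j) choose j)"
proof (cases "d \<le> j")
  case False
  then show ?thesis by (auto simp: nbinom_shift_coeff_def)
next
  case True
  then obtain p where j: "j = d + p" using le_Suc_ex by blast
  obtain k' l' where k': "k = Suc k'" and l': "l = Suc l'" using assms by (cases k; cases l) auto
  define A A' B B' where "A = real ((l' + p) choose p)" and "A' = real ((l + p) choose Suc p)"
    and "B = real ((k' + j) choose j)" and "B' = real ((k + j) choose Suc j)"
  have A: "real (Suc p) * A' = real (l + p) * A"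
    unfolding A_def A'_def using Suc_times_binomial_pred[of l p] by (simp add: l')
  have B: "real (Suc j) * B' = real (k + j) * B"
    unfolding B_def B'_def using Suc_times_binomial_pred[of k j] by (simp add: k')
  have "real (k + j) * real (Suc p) \<le> real (l + p) * real (Suc j)"
  proof -
    have "real (l + p) * real (Suc j) - real (k + j) * real (Suc p)
        = (real l - real k) * (real p + 1) + real d * (real l - 1)"
      by (simp add: j algebra_simps)
    also have "\<dots> \<ge> 0" using assms by simp
    finally show ?thesis by simp
  qed
  then have "A * B * (real (k + j) * real (Suc p)) \<le> A * B * (real (l + p) * real (Suc j))"
    unfolding A_def B_def by (intro mult_left_mono) auto
  then have "(A * B') * (real (Suc p) * real (Suc j)) \<le> (A' * B) * (real (Suc p) * real (Suc j))"
    by (metis A B mult.commute mult.left_commute)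
  then have "A * B' \<le> A' * B"
    by (rule mult_right_le_imp_le) auto
  moreover have "nbinom_shift_coeff d l j = A" "nbinom_shift_coeff d l (Suc j) = A'"
    "real ((k - 1 + Suc j) choose Suc j) = B'" "real ((k - 1 + j) choose j) = B"
    by (simp_all add: nbinom_shift_coeff_def A_def A'_def B_def B'_def j k' l' del: binomial_Suc_Suc)
  ultimately show ?thesis
    by simp
qed

lemma nbinom_poly_shift_cross_le:
  assumes "1 \<le> k" "k \<le> l" "0 \<le> u" "u \<le> u'"
  shows "u ^ d * nbinom_poly l t u * nbinom_poly k (t + d) u'
    \<le> u' ^ d * nbinom_poly l t u' * nbinom_poly k (t + d) u"
proof -
  have "nbinom_shift_coeff d l i * real ((k - 1 + j) choose j)
      \<le> nbinom_shift_coeff d l j * real ((k - 1 + i) choose i)" if "i \<le> j" for i j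
    by (rule ratio_mono_of_consecutive[where b = "\<lambda>j. real ((k - 1 + j) choose j)"])
      (use nbinom_shift_coeff_ratio_step[OF assms(1,2)] that in auto)
  then show ?thesis
    unfolding power_times_nbinom_poly nbinom_poly_def[of k]
    by (rule sum_power_cross_le[OF assms(3,4)])
qed

lemma hazard_factor_ratio_scaled_mono:
  assumes kl: "1 \<le> k" "k \<le> l" and "t \<le> s" and u: "0 < u" "u \<le> u'" and r: "0 < \<rho>" "\<rho> \<le> 1"
  shows "hazard_factor k s (\<rho> * u) / hazard_factor l t u \<le> hazard_factor k s (\<rho> * u') / hazard_factor l t u'"
proof -
  define d where "d = s - t"
  have s: "s = t + d" using \<open>t \<le> s\<close> d_def by simp
  define cX cY where "cX = real (k + s) * real ((k - 1 + s) choose s)"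
    and "cY = real (l + t) * real ((l - 1 + t) choose t)"
  have "0 \<le> cX" "0 < cY" using kl by (auto simp: cX_def cY_def)
  have scaled: "hazard_factor k s (\<rho> * v) / hazard_factor l t v
      = cX / cY * \<rho> ^ s * (v ^ d * nbinom_poly l t v / nbinom_poly k s (\<rho> * v))" if "0 < v" for v
  proof -
    have "v ^ s = v ^ t * v ^ d" unfolding s by (simp add: power_add)
    then show ?thesis
      using that r \<open>0 < cY\<close> nbinom_poly_pos[of v l t] nbinom_poly_pos[of "\<rho> * v" k s]
      unfolding hazard_factor_def cX_def[symmetric] cY_def[symmetric]
      by (simp add: power_mult_distrib field_simps)
  qed
  have K: "0 < nbinom_poly k s u" "0 < nbinom_poly k s u'" "0 < nbinom_poly k s (\<rho> * u)"
    "0 < nbinom_poly k s (\<rho> * u')" "0 < nbinom_poly l t u" "0 < nbinom_poly l t u'"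
    using u r by (auto intro!: nbinom_poly_pos)
  have shift: "u ^ d * nbinom_poly l t u * nbinom_poly k s u' \<le> u' ^ d * nbinom_poly l t u' * nbinom_poly k s u"
    unfolding s using kl u by (intro nbinom_poly_shift_cross_le) auto
  have scale: "nbinom_poly k s u * nbinom_poly k s (\<rho> * u') \<le> nbinom_poly k s u' * nbinom_poly k s (\<rho> * u)"
    using u r by (intro nbinom_poly_scaled_cross_le) auto
  have "(nbinom_poly k s u * nbinom_poly k s u') * (u ^ d * nbinom_poly l t u * nbinom_poly k s (\<rho> * u'))
      \<le> (nbinom_poly k s u * nbinom_poly k s u') * (u' ^ d * nbinom_poly l t u' * nbinom_poly k s (\<rho> * u))"
    using mult_mono[OF shift scale] u K by (simp add: algebra_simps)
  then have "u ^ d * nbinom_poly l t u * nbinom_poly k s (\<rho> * u') \<le> u' ^ d * nbinom_poly l t u' * nbinom_poly k s (\<rho> * u)"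
    using K by (simp add: mult_le_cancel_left_pos)
  then have "u ^ d * nbinom_poly l t u / nbinom_poly k s (\<rho> * u) \<le> u' ^ d * nbinom_poly l t u' / nbinom_poly k s (\<rho> * u')"
    using K by (simp add: divide_simps)
  then show ?thesis
    unfolding scaled[OF u(1)] scaled[OF order.strict_trans2[OF u]]
    using \<open>0 \<le> cX\<close> \<open>0 < cY\<close> r by (intro mult_left_mono) auto
qed

text \<open>Moving from \<open>(a, b)\<close> to \<open>(a', b')\<close> first along the ray \<open>a / b = const\<close> and then
  increasing \<open>a\<close> alone.\<close>

lemma hazard_factor_ratio_mono:
  assumes kl: "1 \<le> k" "k \<le> l" and ts: "t \<le> s"
    and "0 < a" "a \<le> b" "b \<le> b'" "0 < a'" "a / b \<le> a' / b'"
  shows "hazard_factor k s a / hazard_factor l t b \<le> hazard_factor k s a' / hazard_factor l t b'"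
proof -
  define \<rho> where "\<rho> = a / b"
  have "0 < b" "0 < b'" "0 < \<rho>" "\<rho> \<le> 1" "a = \<rho> * b" "\<rho> * b' \<le> a'"
    using assms by (auto simp: \<rho>_def divide_simps)
  then have "hazard_factor k s a / hazard_factor l t b \<le> hazard_factor k s (\<rho> * b') / hazard_factor l t b'"
    using hazard_factor_ratio_scaled_mono[OF kl ts] assms by simp
  also have "\<dots> \<le> hazard_factor k s a' / hazard_factor l t b'"
    using \<open>0 < b'\<close> \<open>0 < \<rho>\<close> \<open>\<rho> * b' \<le> a'\<close>
    by (intro divide_right_mono hazard_factor_mono hazard_factor_nonneg) auto
  finally show ?thesis .
qed

lemma ratio_mono_imp_le:
  fixes FX FY :: "real \<Rightarrow> real"
  assumes mono: "mono_on {0<..} (\<lambda>x. FX x / FY x)"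
    and "(FX \<longlongrightarrow> 1) at_top" "(FY \<longlongrightarrow> 1) at_top" and "0 < FY x" "0 < x"
  shows "FX x \<le> FY x"
proof -
  have "((\<lambda>y. FX y / FY y) \<longlongrightarrow> 1 / 1) at_top"
    using assms by (intro tendsto_divide) auto
  moreover have "eventually (\<lambda>y. FX x / FY x \<le> FX y / FY y) at_top"
    unfolding eventually_at_top_linorder using \<open>0 < x\<close>
    by (intro exI[of _ x] allI impI mono_onD[OF mono]) auto
  ultimately have "FX x / FY x \<le> 1"
    by (simp add: tendsto_lowerbound)
  then show ?thesis using \<open>0 < FY x\<close> by (simp add: divide_simps)
qed

lemma hazard_factor_ratio_mono_on:
  fixes FX FY :: "real \<Rightarrow> real"
  assumes kl: "1 \<le> k" "k \<le> l" and ts: "t \<le> s"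
    and FY_mono: "mono_on {0..} FY" and ratio_mono: "mono_on {0<..} (\<lambda>x. FX x / FY x)"
    and FX_le_FY: "\<And>x. 0 < x \<Longrightarrow> FX x \<le> FY x" and FX_pos: "\<And>x. 0 < x \<Longrightarrow> 0 < FX x"
    and "FX 0 = 0" and nonneg: "\<And>x. 0 \<le> FX x" "\<And>x. 0 \<le> FY x"
  shows "mono_on {0..} (\<lambda>x. hazard_factor k s (FX x) / hazard_factor l t (FY x))"
proof (rule mono_onI)
  fix x y :: real assume "x \<in> {0..}" "y \<in> {0..}" "x \<le> y"
  consider "s = 0" | "0 < s" "x = 0" | "0 < x" using \<open>x \<in> {0..}\<close> by force
  then show "hazard_factor k s (FX x) / hazard_factor l t (FY x) \<le> hazard_factor k s (FX y) / hazard_factor l t (FY y)"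
  proof cases
    case 1
    then show ?thesis using ts by (simp add: hazard_factor_def)
  next
    case 2
    then have "hazard_factor k s (FX x) = 0"
      using \<open>FX 0 = 0\<close> by (simp add: hazard_factor_def)
    then show ?thesis
      using nonneg by (simp add: hazard_factor_nonneg)
  next
    case 3
    with \<open>x \<le> y\<close> show ?thesis
      using FX_le_FY FX_pos nonneg mono_onD[OF FY_mono] mono_onD[OF ratio_mono]
      by (intro hazard_factor_ratio_mono[OF kl ts]) auto
  qed
qed

section \<open>Absolutely continuous lifetimes\<close>

lemma cdf_uniform_unit_interval:
  "cdf (uniform_measure lborel {0..1}) u = (if u < 0 then 0 else if u < 1 then u else (1::real))"
proof -
  have "cdf (uniform_measure lborel {0..1}) u = measure lborel ({0..1} \<inter> {..u})"
    unfolding cdf_def by (subst measure_uniform_measure) auto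
  also have "{0..1} \<inter> {..u} = (if u < 0 then {} else {0..min 1 u})" by auto
  finally show ?thesis by (auto simp: min_def)
qed

locale ac_lifetime =
  fixes M :: "'a measure" and Z :: "'a \<Rightarrow> real" and f :: "real \<Rightarrow> real"
  assumes prob_space: "prob_space M" and nonneg_ac: "nonneg_ac_rv M Z f"
begin

abbreviation "F \<equiv> rv_cdf M Z"

lemma distr_eq_density: "distr M lborel Z = density lborel f"
  and measurable_Z [measurable]: "Z \<in> borel_measurable M"
  and borel_measurable_density: "(\<lambda>x. ennreal (f x)) \<in> borel_measurable lborel"
  and density_nonneg: "0 \<le> f x"
  and AE_nonneg: "AE \<omega> in M. 0 \<le> Z \<omega>"
  and cdf_strict_mono: "strict_mono_on {0..} F"
  using nonneg_ac unfolding nonneg_ac_rv_def distributed_def by auto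

lemma borel_measurable_density_real [measurable]: "f \<in> borel_measurable borel"
proof -
  have "(\<lambda>x. enn2real (ennreal (f x))) \<in> borel_measurable lborel"
    using borel_measurable_density by measurable
  then show ?thesis using density_nonneg by simp
qed

sublocale D: real_distribution "density lborel f"
  unfolding real_distribution_def real_distribution_axioms_def distr_eq_density[symmetric]
  using prob_space by (auto intro!: prob_space.prob_space_distr)

lemma cdf_eq: "F = cdf (density lborel f)"
proof
  fix x
  have "cdf (density lborel f) x = measure M (Z -` {..x} \<inter> space M)"
    unfolding cdf_def distr_eq_density[symmetric] by (intro measure_distr) auto
  also have "Z -` {..x} \<inter> space M = {\<omega>\<in>space M. Z \<omega> \<le> x}" by auto
  finally show "F x = cdf (density lborel f) x" unfolding rv_cdf_def by simp
qed

lemma isCont_cdf: "isCont F x"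
proof -
  have "emeasure (density lborel f) {x} = 0"
    using borel_measurable_density
    by (subst emeasure_density) (auto intro!: nn_integral_null_set countable_imp_null_set_lborel)
  then show ?thesis
    unfolding cdf_eq D.isCont_cdf by (simp add: measure_def)
qed

lemma cdf_mono: "x \<le> y \<Longrightarrow> F x \<le> F y"
  unfolding cdf_eq by (rule D.cdf_nondecreasing)

lemma cdf_nonneg: "0 \<le> F x"
  unfolding cdf_eq by (rule D.cdf_nonneg)

lemma cdf_le_1: "F x \<le> 1"
  unfolding cdf_eq by (rule D.cdf_bounded_prob)

lemma cdf_tendsto_1: "(F \<longlongrightarrow> 1) at_top"
  unfolding cdf_eq by (rule D.cdf_lim_at_top_prob)

lemma cdf_neg: "x < 0 \<Longrightarrow> F x = 0"
  unfolding rv_cdf_def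
  by (rule prob_space.prob_eq_0_AE[OF prob_space]) (use AE_nonneg in auto)

lemma cdf_nonpos: "x \<le> 0 \<Longrightarrow> F x = 0"
proof -
  have "(F \<longlongrightarrow> F 0) (at_left 0)"
    using isCont_cdf[of 0] by (simp add: isCont_def filterlim_at_split)
  moreover have "eventually (\<lambda>x. x \<in> {-1<..<0}) (at_left (0::real))"
    by (rule eventually_at_left_real) simp
  then have "eventually (\<lambda>x. 0 = F x) (at_left (0::real))"
    by eventually_elim (simp add: cdf_neg)
  then have "(F \<longlongrightarrow> 0) (at_left 0)"
    by (rule Lim_transform_eventually[OF tendsto_const])
  ultimately have "F 0 = 0"
    using tendsto_unique[OF trivial_limit_at_left_real] by blast
  then show "x \<le> 0 \<Longrightarrow> F x = 0"
    using cdf_neg by (cases "x = 0") auto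
qed

lemma cdf_pos:
  assumes "0 < x"
  shows "0 < F x"
proof -
  have "F 0 < F x"
    using cdf_strict_mono assms by (auto simp: strict_mono_on_def)
  then show ?thesis using cdf_nonpos[of 0] by simp
qed

lemma cdf_less_1: "F x < 1"
proof -
  have "F x \<le> F (max x 0)" by (intro cdf_mono) auto
  also have "\<dots> < F (max x 0 + 1)"
    using cdf_strict_mono unfolding strict_mono_on_def by auto
  also have "\<dots> \<le> 1" by (rule cdf_le_1)
  finally show ?thesis .
qed

lemma borel_measurable_cdf [measurable]: "F \<in> borel_measurable borel"
  by (rule borel_measurable_mono) (auto simp: mono_def cdf_mono)

lemma cdf_level_set:
  assumes "0 \<le> u" "u < 1"
  obtains x where "F x = u" "{t. F t \<le> u} = {..x}"
proof -
  obtain T where T: "\<And>t. t \<ge> T \<Longrightarrow> u < F t"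
    using order_tendstoD(1)[OF cdf_tendsto_1 \<open>u < 1\<close>] unfolding eventually_at_top_linorder by auto
  have "\<exists>x. 0 \<le> x \<and> x \<le> max T 0 \<and> F x = u"
    using assms T[of "max T 0"] cdf_nonpos[of 0] isCont_cdf
    by (intro IVT' continuous_at_imp_continuous_on) auto
  then obtain x where x: "0 \<le> x" "F x = u" by auto
  have "F t \<le> u \<longleftrightarrow> t \<le> x" for t
    using cdf_mono[of t x] cdf_strict_mono x unfolding strict_mono_on_def
    by (cases "t \<le> x") (auto simp: not_le)
  then show ?thesis using that x by blast
qed

lemma distr_cdf_uniform: "distr (density lborel f) borel F = uniform_measure lborel {0..1}"
proof (rule cdf_unique)
  show "real_distribution (distr (density lborel f) borel F)"
    unfolding real_distribution_def real_distribution_axioms_def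
    by (auto intro!: D.prob_space_distr)
  show "real_distribution (uniform_measure lborel {0..1::real})"
    unfolding real_distribution_def real_distribution_axioms_def
    by (auto intro!: prob_space_uniform_measure)
  show "cdf (distr (density lborel f) borel F) = cdf (uniform_measure lborel {0..1})"
  proof
    fix u
    have "cdf (distr (density lborel f) borel F) u = measure (density lborel f) {t. F t \<le> u}"
      unfolding cdf_def by (subst measure_distr) (auto simp: vimage_def Int_def)
    also have "\<dots> = cdf (uniform_measure lborel {0..1}) u"
    proof -
      consider "u < 0" | "0 \<le> u" "u < 1" | "1 \<le> u" by linarith
      then show ?thesis
      proof cases
        case 1
        then have "{t. F t \<le> u} = {}" using cdf_nonneg by (auto simp: not_le intro: less_le_trans)
        then show ?thesis using 1 by (simp add: cdf_uniform_unit_interval)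
      next
        case 2
        then obtain x where "F x = u" "{t. F t \<le> u} = {..x}" by (rule cdf_level_set)
        then show ?thesis using 2 by (simp add: cdf_uniform_unit_interval cdf_eq cdf_def)
      next
        case 3
        then have "{t. F t \<le> u} = UNIV" using cdf_le_1 by (auto intro: order.trans)
        then show ?thesis using 3 D.prob_space by (simp add: cdf_uniform_unit_interval)
      qed
    qed
    finally show "cdf (distr (density lborel f) borel F) u = cdf (uniform_measure lborel {0..1}) u" .
  qed
qed

lemma nn_integral_cdf_subst:
  assumes [measurable]: "\<psi> \<in> borel_measurable borel"
  shows "(\<integral>\<^sup>+t. ennreal (f t) * \<psi> (F t) \<partial>lborel) = (\<integral>\<^sup>+u. \<psi> u * indicator {0..1} u \<partial>lborel)"
proof -
  have "(\<integral>\<^sup>+t. ennreal (f t) * \<psi> (F t) \<partial>lborel) = (\<integral>\<^sup>+t. \<psi> (F t) \<partial>density lborel f)"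
    using borel_measurable_density by (subst nn_integral_density) auto
  also have "\<dots> = (\<integral>\<^sup>+u. \<psi> u \<partial>distr (density lborel f) borel F)"
    by (subst nn_integral_distr) auto
  also have "\<dots> = (\<integral>\<^sup>+u. \<psi> u * indicator {0..1} u \<partial>lborel)"
    unfolding distr_cdf_uniform by (subst nn_integral_uniform_measure) (auto simp: divide_ennreal_def)
  finally show ?thesis .
qed

lemma hazard_rate_nonneg: "0 \<le> hazard_rate M Z f x"
  unfolding hazard_rate_def using density_nonneg[of x] cdf_le_1[of x] by simp

end

section \<open>\<open>k\<close>-out-of-\<open>n\<close> systems\<close>

lemma card_exceed_antimono:
  fixes X :: "nat \<Rightarrow> 'a \<Rightarrow> real"
  assumes "x \<le> y"
  shows "card {i. i < n \<and> y < X i \<omega>} \<le> card {i. i < n \<and> x < X i \<omega>}"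
  using assms by (intro card_mono) auto

lemma card_exceed_open:
  fixes X :: "nat \<Rightarrow> 'a \<Rightarrow> real"
  assumes "k \<le> card {i. i < n \<and> x < X i \<omega>}"
  obtains y where "x < y" "k \<le> card {i. i < n \<and> y < X i \<omega>}"
proof -
  define S where "S = {i. i < n \<and> x < X i \<omega>}"
  define m where "m = Min (insert (x + 1) ((\<lambda>i. X i \<omega>) ` S))"
  have "finite S" unfolding S_def by simp
  then have "x < m" "\<And>i. i \<in> S \<Longrightarrow> m \<le> X i \<omega>"
    unfolding m_def by (auto simp: S_def)
  then have "x < (x + m) / 2" "S \<subseteq> {i. i < n \<and> (x + m) / 2 < X i \<omega>}"
    by (force simp: S_def)+
  then show ?thesis
    using assms card_mono[of "{i. i < n \<and> (x + m) / 2 < X i \<omega>}" S] that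
    unfolding S_def by fastforce
qed

lemma exceedance_level_set_bounded:
  fixes X :: "nat \<Rightarrow> 'a \<Rightarrow> real"
  assumes "1 \<le> k" "k \<le> n"
  shows "{t. k \<le> card {i. i < n \<and> t < X i \<omega>}} \<noteq> {}"
    and "bdd_above {t. k \<le> card {i. i < n \<and> t < X i \<omega>}}"
proof -
  define B where "B = (\<Sum>i<n. \<bar>X i \<omega>\<bar>)"
  have X_le_B: "\<bar>X i \<omega>\<bar> \<le> B" if "i < n" for i
    unfolding B_def using that by (intro member_le_sum) auto
  have "{i. i < n \<and> - B - 1 < X i \<omega>} = {..<n}"
    using X_le_B by fastforce
  then have "- B - 1 \<in> {t. k \<le> card {i. i < n \<and> t < X i \<omega>}}"
    using assms by simp
  then show "{t. k \<le> card {i. i < n \<and> t < X i \<omega>}} \<noteq> {}"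
    by blast
  have "t \<le> B" if "k \<le> card {i. i < n \<and> t < X i \<omega>}" for t
  proof -
    have "0 < card {i. i < n \<and> t < X i \<omega>}"
      using that assms by simp
    then have "{i. i < n \<and> t < X i \<omega>} \<noteq> {}"
      by fastforce
    then show ?thesis using X_le_B by fastforce
  qed
  then show "bdd_above {t. k \<le> card {i. i < n \<and> t < X i \<omega>}}"
    by (auto simp: bdd_above_def)
qed

lemma kofn_lifetime_le_iff:
  fixes X :: "nat \<Rightarrow> 'a \<Rightarrow> real"
  assumes "1 \<le> k" "k \<le> n"
  shows "kofn_lifetime k n X \<omega> \<le> x \<longleftrightarrow> card {i. i < n \<and> x < X i \<omega>} < k"
proof -
  define T where "T = {t. k \<le> card {i. i < n \<and> t < X i \<omega>}}"
  have "T \<noteq> {}" "bdd_above T"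
    unfolding T_def using exceedance_level_set_bounded[OF assms] by auto
  show ?thesis
  proof
    assume le: "kofn_lifetime k n X \<omega> \<le> x"
    show "card {i. i < n \<and> x < X i \<omega>} < k"
    proof (rule ccontr)
      assume "\<not> ?thesis"
      then have "k \<le> card {i. i < n \<and> x < X i \<omega>}" by simp
      then obtain y where "x < y" "k \<le> card {i. i < n \<and> y < X i \<omega>}"
        by (rule card_exceed_open)
      then have "y \<le> Sup T"
        using \<open>bdd_above T\<close> by (intro cSup_upper) (simp_all add: T_def)
      then show False
        using le \<open>x < y\<close> unfolding kofn_lifetime_def T_def by simp
    qed
  next
    assume less_k: "card {i. i < n \<and> x < X i \<omega>} < k"
    have "t < x" if "t \<in> T" for t
    proof (rule ccontr)
      assume "\<not> t < x"
      then have "card {i. i < n \<and> t < X i \<omega>} \<le> card {i. i < n \<and> x < X i \<omega>}"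
        by (intro card_exceed_antimono) simp
      then show False using that less_k unfolding T_def by simp
    qed
    then show "kofn_lifetime k n X \<omega> \<le> x"
      unfolding kofn_lifetime_def T_def[symmetric]
      using \<open>T \<noteq> {}\<close> by (intro cSup_least) (auto intro: less_imp_le)
  qed
qed

context prob_space
begin

lemma prob_exceedance_pattern:
  fixes X :: "nat \<Rightarrow> 'a \<Rightarrow> real"
  assumes ind: "indep_vars (\<lambda>_. borel) X {..<n}" and "0 < n"
    and p: "\<And>i. i < n \<Longrightarrow> prob {\<omega>\<in>space M. x < X i \<omega>} = p"
    and S: "S \<subseteq> {..<n}"
  shows "{\<omega>\<in>space M. {i. i < n \<and> x < X i \<omega>} = S} \<in> events"
    and "prob {\<omega>\<in>space M. {i. i < n \<and> x < X i \<omega>} = S} = p ^ card S * (1 - p) ^ (n - card S)"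
proof -
  define B where "B i = {\<omega>\<in>space M. if i \<in> S then x < X i \<omega> else X i \<omega> \<le> x}" for i
  have eq: "{\<omega>\<in>space M. {i. i < n \<and> x < X i \<omega>} = S} = (\<Inter>i<n. B i)"
    using S \<open>0 < n\<close> unfolding B_def by (auto split: if_splits; metis lessThan_iff not_le)
  have indB: "indep_events B {..<n}"
    unfolding B_def
  proof (rule indep_eventsI_indep_vars[OF ind, where P = "\<lambda>i y. if i \<in> S then x < y else y \<le> x"])
    fix i show "{y \<in> space borel. if i \<in> S then x < y else y \<le> x} \<in> sets borel"
      by (cases "i \<in> S") auto
  qed
  then have "B i \<in> events" if "i < n" for i
    using that by (auto simp: indep_events_def)
  then show "{\<omega>\<in>space M. {i. i < n \<and> x < X i \<omega>} = S} \<in> events"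
    unfolding eq using \<open>0 < n\<close> by (intro sets.finite_INT) auto
  have prob_B: "prob (B i) = (if i \<in> S then p else 1 - p)" if "i < n" for i
  proof -
    have "{\<omega>\<in>space M. X i \<omega> \<le> x} = space M - {\<omega>\<in>space M. x < X i \<omega>}" by auto
    moreover have "random_variable borel (X i)"
      using ind that unfolding indep_vars_def2 by auto
    then have "{\<omega>\<in>space M. x < X i \<omega>} \<in> events"
      by measurable
    ultimately show ?thesis
      using p[OF that] prob_compl unfolding B_def by auto
  qed
  have "prob (\<Inter>i<n. B i) = (\<Prod>i<n. prob (B i))"
    using indB \<open>0 < n\<close> unfolding indep_events_def by auto
  also have "\<dots> = (\<Prod>i\<in>{..<n} - S. prob (B i)) * (\<Prod>i\<in>S. prob (B i))"
    using S by (intro prod.subset_diff) auto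
  also have "\<dots> = (\<Prod>i\<in>{..<n} - S. 1 - p) * (\<Prod>i\<in>S. p)"
    using prob_B S by (intro arg_cong2[where f = "(*)"] prod.cong) auto
  also have "\<dots> = p ^ card S * (1 - p) ^ (n - card S)"
    using S by (simp add: card_Diff_subset finite_subset mult.commute)
  finally show "prob {\<omega>\<in>space M. {i. i < n \<and> x < X i \<omega>} = S} = p ^ card S * (1 - p) ^ (n - card S)"
    unfolding eq .
qed

lemma prob_at_least_k_exceed:
  fixes X :: "nat \<Rightarrow> 'a \<Rightarrow> real"
  assumes ind: "indep_vars (\<lambda>_. borel) X {..<n}" and "0 < n"
    and p: "\<And>i. i < n \<Longrightarrow> prob {\<omega>\<in>space M. x < X i \<omega>} = p"
  shows "{\<omega>\<in>space M. k \<le> card {i. i < n \<and> x < X i \<omega>}} \<in> events"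
    and "prob {\<omega>\<in>space M. k \<le> card {i. i < n \<and> x < X i \<omega>}}
      = (\<Sum>j=k..n. real (n choose j) * p ^ j * (1 - p) ^ (n - j))"
proof -
  define A where "A S = {\<omega>\<in>space M. {i. i < n \<and> x < X i \<omega>} = S}" for S
  define Ss where "Ss = {S. S \<subseteq> {..<n} \<and> k \<le> card S}"
  have "finite Ss" unfolding Ss_def
    by (rule finite_subset[of _ "Pow {..<n}"]) auto
  have A: "A S \<in> events" "prob (A S) = p ^ card S * (1 - p) ^ (n - card S)" if "S \<in> Ss" for S
    using prob_exceedance_pattern[OF ind \<open>0 < n\<close> p] that unfolding A_def Ss_def by auto
  have eq: "{\<omega>\<in>space M. k \<le> card {i. i < n \<and> x < X i \<omega>}} = (\<Union>S\<in>Ss. A S)"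
    unfolding Ss_def A_def by auto
  show "{\<omega>\<in>space M. k \<le> card {i. i < n \<and> x < X i \<omega>}} \<in> events"
    unfolding eq using \<open>finite Ss\<close> A by (intro sets.finite_UN) auto
  have "prob (\<Union>S\<in>Ss. A S) = (\<Sum>S\<in>Ss. prob (A S))"
    using \<open>finite Ss\<close> A by (intro finite_measure_finite_Union) (auto simp: disjoint_family_on_def A_def)
  also have "\<dots> = (\<Sum>S\<in>Ss. p ^ card S * (1 - p) ^ (n - card S))"
    using A by simp
  also have "\<dots> = (\<Sum>j=k..n. \<Sum>S\<in>{S \<in> Ss. card S = j}. p ^ card S * (1 - p) ^ (n - card S))"
    using \<open>finite Ss\<close> card_mono[of "{..<n}"]
    by (intro sum.group[symmetric]) (auto simp: Ss_def)
  also have "\<dots> = (\<Sum>j=k..n. real (n choose j) * p ^ j * (1 - p) ^ (n - j))"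
  proof (rule sum.cong[OF refl])
    fix j assume "j \<in> {k..n}"
    then have "{S \<in> Ss. card S = j} = {S. S \<subseteq> {..<n} \<and> card S = j}"
      unfolding Ss_def by auto
    then show "(\<Sum>S\<in>{S \<in> Ss. card S = j}. p ^ card S * (1 - p) ^ (n - card S))
        = real (n choose j) * p ^ j * (1 - p) ^ (n - j)"
      using n_subsets[of "{..<n}" j] by simp
  qed
  finally show "prob {\<omega>\<in>space M. k \<le> card {i. i < n \<and> x < X i \<omega>}}
      = (\<Sum>j=k..n. real (n choose j) * p ^ j * (1 - p) ^ (n - j))"
    unfolding eq .
qed

end

locale kofn_system =
  fixes M :: "'a measure" and X :: "nat \<Rightarrow> 'a \<Rightarrow> real" and f :: "real \<Rightarrow> real" and n k :: nat
  assumes prob_space: "prob_space M"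
    and indep: "prob_space.indep_vars M (\<lambda>_. borel) X {..<n}"
    and components: "\<forall>i<n. nonneg_ac_rv M (X i) f"
    and k: "1 \<le> k" "k \<le> n"
begin

abbreviation "F \<equiv> rv_cdf M (X 0)"
abbreviation "\<tau> \<equiv> kofn_lifetime k n X"

lemma ac_lifetime_component: "i < n \<Longrightarrow> ac_lifetime M (X i) f"
  using prob_space components by (intro ac_lifetime.intro) auto

sublocale C: ac_lifetime M "X 0" f
  using k by (intro ac_lifetime_component) simp

lemma cdf_component:
  assumes "i < n"
  shows "rv_cdf M (X i) = F"
proof -
  have "rv_cdf M (X i) = cdf (density lborel f)"
    by (rule ac_lifetime.cdf_eq[OF ac_lifetime_component[OF assms]])
  then show ?thesis using C.cdf_eq by simp
qed

lemma prob_component_exceeds: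
  assumes "i < n"
  shows "prob_space.prob M {\<omega>\<in>space M. x < X i \<omega>} = 1 - F x"
proof -
  have "X i \<in> borel_measurable M"
    by (rule ac_lifetime.measurable_Z[OF ac_lifetime_component[OF assms]])
  then have "{\<omega>\<in>space M. X i \<omega> \<le> x} \<in> sets M" by measurable
  moreover have "{\<omega>\<in>space M. x < X i \<omega>} = space M - {\<omega>\<in>space M. X i \<omega> \<le> x}" by auto
  ultimately have "prob_space.prob M {\<omega>\<in>space M. x < X i \<omega>} = 1 - rv_cdf M (X i) x"
    using prob_space.prob_compl[OF prob_space] unfolding rv_cdf_def by simp
  then show ?thesis
    using cdf_component[OF assms] by simp
qed

definition survival_event :: "real \<Rightarrow> 'a set" where
  "survival_event x = {\<omega>\<in>space M. k \<le> card {i. i < n \<and> x < X i \<omega>}}"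

lemma survival_event:
  "survival_event x \<in> sets M"
  "measure M (survival_event x) = (\<Sum>j=k..n. real (n choose j) * (1 - F x) ^ j * (1 - (1 - F x)) ^ (n - j))"
proof -
  have "0 < n" using k by simp
  note at_least_k = prob_space.prob_at_least_k_exceed[OF prob_space indep \<open>0 < n\<close> prob_component_exceeds]
  show "survival_event x \<in> sets M"
    unfolding survival_event_def by (rule at_least_k(1))
  show "measure M (survival_event x) = (\<Sum>j=k..n. real (n choose j) * (1 - F x) ^ j * (1 - (1 - F x)) ^ (n - j))"
    unfolding survival_event_def by (rule at_least_k(2))
qed

lemma lifetime_le_eq: "{\<omega>\<in>space M. \<tau> \<omega> \<le> x} = space M - survival_event x"
  unfolding survival_event_def by (auto simp: kofn_lifetime_le_iff[OF k])

lemma measurable_lifetime [measurable]: "\<tau> \<in> borel_measurable M"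
  unfolding borel_measurable_iff_le lifetime_le_eq using survival_event by auto

lemma cdf_lifetime: "rv_cdf M \<tau> x = 1 - (1 - F x) ^ k * nbinom_poly k (n - k) (F x)"
proof -
  have "measure M (survival_event x) = (1 - F x) ^ k * nbinom_poly k (n - k) (F x)"
    using binomial_tail_eq_nbinom_poly[of "1 - F x" "F x" k "n - k"] k
    by (simp add: survival_event)
  then show ?thesis
    unfolding rv_cdf_def lifetime_le_eq
    using prob_space.prob_compl[OF prob_space survival_event(1)] by simp
qed

definition lifetime_density :: "real \<Rightarrow> real" where
  "lifetime_density t = beta_density k (n - k) (F t) * f t"

lemma lifetime_density_nonneg: "0 \<le> lifetime_density t"
  unfolding lifetime_density_def
  using C.cdf_nonneg C.cdf_le_1 C.density_nonneg by (intro mult_nonneg_nonneg beta_density_nonneg) auto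

lemma borel_measurable_lifetime_density [measurable]: "lifetime_density \<in> borel_measurable borel"
  unfolding lifetime_density_def by measurable

lemma nn_integral_lifetime_density:
  assumes [measurable]: "\<phi> \<in> borel_measurable borel"
  shows "(\<integral>\<^sup>+t. ennreal (lifetime_density t) * \<phi> (F t) \<partial>lborel)
    = (\<integral>\<^sup>+u. ennreal (beta_density k (n - k) u) * \<phi> u * indicator {0..1} u \<partial>lborel)"
proof -
  have "(\<integral>\<^sup>+t. ennreal (lifetime_density t) * \<phi> (F t) \<partial>lborel)
      = (\<integral>\<^sup>+t. ennreal (f t) * (ennreal (beta_density k (n - k) (F t)) * \<phi> (F t)) \<partial>lborel)"
    unfolding lifetime_density_def using C.density_nonneg C.cdf_nonneg C.cdf_le_1
    by (intro nn_integral_cong) (simp add: ennreal_mult beta_density_nonneg mult_ac)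
  also have "\<dots> = (\<integral>\<^sup>+u. ennreal (beta_density k (n - k) u) * \<phi> u * indicator {0..1} u \<partial>lborel)"
    by (subst C.nn_integral_cdf_subst) (auto simp: mult.assoc)
  finally show ?thesis .
qed

lemma emeasure_lifetime_density_atMost_nonneg:
  assumes "0 \<le> x"
  shows "emeasure (density lborel lifetime_density) {..x} = ennreal (rv_cdf M \<tau> x)"
proof -
  have "indicator {..x} t = (indicator {..F x} (F t) :: ennreal)" for t
    using C.cdf_mono[of t x] C.cdf_strict_mono assms
    by (cases "t \<le> x") (auto simp: indicator_def strict_mono_on_def not_le)
  then have "emeasure (density lborel lifetime_density) {..x}
      = (\<integral>\<^sup>+t. ennreal (lifetime_density t) * indicator {..F x} (F t) \<partial>lborel)"
    by (subst emeasure_density) (auto simp: mult.commute)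
  also have "\<dots> = (\<integral>\<^sup>+u. ennreal (beta_density k (n - k) u) * indicator {0..F x} u \<partial>lborel)"
    using C.cdf_le_1[of x] C.cdf_nonneg[of x]
    by (subst nn_integral_lifetime_density) (auto intro!: nn_integral_cong simp: indicator_def)
  also have "\<dots> = ennreal (rv_cdf M \<tau> x)"
    using k C.cdf_le_1[of x] C.cdf_nonneg[of x] by (simp add: nn_integral_beta_density cdf_lifetime)
  finally show ?thesis .
qed

lemma cdf_lifetime_nonpos: "x \<le> 0 \<Longrightarrow> rv_cdf M \<tau> x = 0"
  by (simp add: cdf_lifetime C.cdf_nonpos)

lemma emeasure_lifetime_density_atMost:
  "emeasure (density lborel lifetime_density) {..x} = ennreal (rv_cdf M \<tau> x)"
proof (cases "0 \<le> x")
  case False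
  have "emeasure (density lborel lifetime_density) {..x} \<le> emeasure (density lborel lifetime_density) {..0}"
    using False by (intro emeasure_mono) auto
  also have "\<dots> = 0"
    by (simp add: emeasure_lifetime_density_atMost_nonneg cdf_lifetime_nonpos)
  finally show ?thesis
    using False by (simp add: cdf_lifetime_nonpos)
qed (rule emeasure_lifetime_density_atMost_nonneg)

lemma prob_space_lifetime_density: "prob_space (density lborel lifetime_density)"
proof
  have "emeasure (density lborel lifetime_density) UNIV = (\<integral>\<^sup>+t. ennreal (lifetime_density t) * 1 \<partial>lborel)"
    by (subst emeasure_density) auto
  also have "\<dots> = (\<integral>\<^sup>+u. ennreal (beta_density k (n - k) u) * indicator {0..1} u \<partial>lborel)"
    using nn_integral_lifetime_density[of "\<lambda>_. 1"] by simp
  also have "\<dots> = 1"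
    using k by (simp add: nn_integral_beta_density)
  finally show "emeasure (density lborel lifetime_density) (space (density lborel lifetime_density)) = 1"
    by simp
qed

lemma distr_lifetime: "distr M lborel \<tau> = density lborel lifetime_density"
proof (rule cdf_unique)
  show "real_distribution (distr M lborel \<tau>)"
    unfolding real_distribution_def real_distribution_axioms_def
    using prob_space by (auto intro!: prob_space.prob_space_distr)
  show "real_distribution (density lborel lifetime_density)"
    unfolding real_distribution_def real_distribution_axioms_def
    using prob_space_lifetime_density by auto
  show "cdf (distr M lborel \<tau>) = cdf (density lborel lifetime_density)"
  proof
    fix x
    have "cdf (distr M lborel \<tau>) x = measure M (\<tau> -` {..x} \<inter> space M)"
      unfolding cdf_def by (intro measure_distr) auto
    also have "\<dots> = rv_cdf M \<tau> x"
      unfolding rv_cdf_def by (simp add: vimage_def Int_def conj_commute)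
    also have "\<dots> = cdf (density lborel lifetime_density) x"
      unfolding cdf_def measure_def emeasure_lifetime_density_atMost
      using prob_space.prob_le_1[OF prob_space] by (simp add: rv_cdf_def)
    finally show "cdf (distr M lborel \<tau>) x = cdf (density lborel lifetime_density) x" .
  qed
qed

lemma AE_lifetime_nonneg: "AE \<omega> in M. 0 \<le> \<tau> \<omega>"
proof -
  have "AE \<omega> in M. \<forall>i\<in>{..<n}. 0 \<le> X i \<omega>"
    using ac_lifetime.AE_nonneg[OF ac_lifetime_component] by (intro AE_finite_allI) auto
  then show ?thesis
  proof eventually_elim
    fix \<omega> assume nonneg: "\<forall>i\<in>{..<n}. 0 \<le> X i \<omega>"
    show "0 \<le> \<tau> \<omega>"
    proof (rule ccontr)
      assume "\<not> 0 \<le> \<tau> \<omega>"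
      then have "\<tau> \<omega> < X i \<omega>" if "i < n" for i
        using nonneg that by (meson lessThan_iff less_le_trans not_le)
      then have "{i. i < n \<and> \<tau> \<omega> < X i \<omega>} = {..<n}"
        by auto
      then show False
        using kofn_lifetime_le_iff[OF k, of X \<omega> "\<tau> \<omega>"] k by simp
    qed
  qed
qed

lemma cdf_lifetime_strict_mono: "strict_mono_on {0..} (rv_cdf M \<tau>)"
proof (rule strict_mono_onI)
  fix x y :: real assume "x \<in> {0..}" "y \<in> {0..}" "x < y"
  then have "F x < F y"
    using C.cdf_strict_mono by (auto simp: strict_mono_on_def)
  then show "rv_cdf M \<tau> x < rv_cdf M \<tau> y"
    unfolding cdf_lifetime using k C.cdf_nonneg C.cdf_le_1
    by (simp add: binomial_survival_strict_antimono)
qed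

lemma nonneg_ac_lifetime: "nonneg_ac_rv M \<tau> lifetime_density"
  unfolding nonneg_ac_rv_def distributed_def
  using distr_lifetime lifetime_density_nonneg AE_lifetime_nonneg cdf_lifetime_strict_mono by auto

lemma hazard_rate_lifetime:
  "hazard_rate M \<tau> lifetime_density x = hazard_rate M (X 0) f x * hazard_factor k (n - k) (F x)"
proof -
  obtain k' where k': "k = Suc k'" using k by (cases k) auto
  have "0 < nbinom_poly k (n - k) (F x)" "0 < 1 - F x"
    using C.cdf_nonneg C.cdf_less_1 by (auto intro: nbinom_poly_pos)
  then show ?thesis
    unfolding hazard_rate_def cdf_lifetime lifetime_density_def beta_density_def hazard_factor_def
    by (simp add: k' field_simps)
qed

end

theorem corollary3p1:
  fixes M :: "'a measure" and N :: "'b measure"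
    and X :: "nat \<Rightarrow> 'a \<Rightarrow> real" and Y :: "nat \<Rightarrow> 'b \<Rightarrow> real"
    and fX fY :: "real \<Rightarrow> real" and n m k l :: nat
  assumes "prob_space M" and "prob_space N"
    and "prob_space.indep_vars M (\<lambda>_. borel) X {..<n}"
    and "\<forall>i<n. nonneg_ac_rv M (X i) fX"
    and "prob_space.indep_vars N (\<lambda>_. borel) Y {..<m}"
    and "\<forall>i<m. nonneg_ac_rv N (Y i) fY"
    and "c_order M (X 0) fX N (Y 0) fY"
    and "rhr_le N (Y 0) M (X 0)"
    and "1 \<le> k" and "k \<le> n" and "1 \<le> l" and "l \<le> m" and "k \<le> l"
    and "m - l \<le> n - k"
  shows "\<exists>g h. nonneg_ac_rv M (kofn_lifetime k n X) g \<and>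
               nonneg_ac_rv N (kofn_lifetime l m Y) h \<and>
               c_order M (kofn_lifetime k n X) g N (kofn_lifetime l m Y) h"
proof -
  interpret SX: kofn_system M X fX n k
    by (rule kofn_system.intro) (rule assms)+
  interpret SY: kofn_system N Y fY m l
    by (rule kofn_system.intro) (rule assms)+
  have rhr: "mono_on {0<..} (\<lambda>x. SX.F x / SY.F x)"
    using \<open>rhr_le N (Y 0) M (X 0)\<close> by (simp add: rhr_le_def)
  have "SX.F x \<le> SY.F x" if "0 < x" for x
    using ratio_mono_imp_le[OF rhr SX.C.cdf_tendsto_1 SY.C.cdf_tendsto_1 SY.C.cdf_pos[OF that] that] .
  moreover have "mono_on {0..} SY.F"
    by (auto intro: mono_onI SY.C.cdf_mono)
  ultimately have "mono_on {0..} (\<lambda>x. hazard_factor k (n - k) (SX.F x) / hazard_factor l (m - l) (SY.F x))"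
    using \<open>1 \<le> k\<close> \<open>k \<le> l\<close> \<open>m - l \<le> n - k\<close> rhr SX.C.cdf_pos SX.C.cdf_nonpos[OF order.refl]
      SX.C.cdf_nonneg SY.C.cdf_nonneg
    by (intro hazard_factor_ratio_mono_on) auto
  moreover have "mono_on {0..} (\<lambda>x. hazard_rate M (X 0) fX x / hazard_rate N (Y 0) fY x)"
    using \<open>c_order M (X 0) fX N (Y 0) fY\<close> by (simp add: c_order_def)
  ultimately have "c_order M SX.\<tau> SX.lifetime_density N SY.\<tau> SY.lifetime_density"
    unfolding c_order_def SX.hazard_rate_lifetime SY.hazard_rate_lifetime times_divide_times_eq[symmetric]
    using SX.C.hazard_rate_nonneg SY.C.hazard_rate_nonneg SX.C.cdf_nonneg SY.C.cdf_nonneg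
    by (intro mono_on_mul) (auto intro!: divide_nonneg_nonneg hazard_factor_nonneg)
  then show ?thesis
    using SX.nonneg_ac_lifetime SY.nonneg_ac_lifetime by blast
qed

end
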